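(* There is a family of instances of problem MR, one for each number of jobs $n$, for which $\frac{OPT_{\mathrm{FCFS}}}{OPT}=\Omega(n)$, where $OPT$ is the optimal objective value of MR and $OPT_{\mathrm{FCFS}}$ is the optimal objective value of MR restricted to the FCFS order.
   Context: Problem MR. There are jobs $\mathcal J=\{1,\dots,n\}$ and processors $\mathcal P=\{1,\dots,m\}$. Job $j$ has weight $w_j>0$, release date $r_j\ge0$, and a nonempty set of Map tasks and a nonempty set of Reduce tasks, preassigned to processors with at most one task of each job per processor; $T_{i,j}$ is the task of job $j$ on processor $i$, with work $v_{i,j}\ge0$. A schedule gives each task a start time and a constant speed $s_{i,j}>0$; the task runs non-preemptively for $v_{i,j}/s_{i,j}$ time units and uses energy $v_{i,j}s_{i,j}^{\beta-1}$, where $\beta>1$ is a fixed constant. Feasibility: each processor runs at most one task at a time; tasks of job $j$ start no earlier than $r_j$; Reduce tasks of job $j$ start only after all Map tasks of job $j$ complete; total energy at most a given budget $E>0$. $C_j$ is the maximum completion time of the tasks of job $j$; the objective is to minimize $\sum_j w_jC_j$. Given an order $\sigma$ of the jobs, MR restricted to $\sigma$ is MR with the additional requirement that on every processor the tasks are executed in the order $\sigma$ of their jobs (the same order for all processors). The FCFS order is any order $\sigma$ such that $r_j<r_{j'}$ implies $j$ precedes $j'$. *)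

theory Defs
  imports Complex_Main
begin

text \<open>Jobs are 0..<n, processors are 0..<m.
  task I i j = Some MapT / Some RedT / None says whether job j has a Map task,
  a Reduce task, or no task on processor i (at most one task per job per processor).\<close>

datatype ttype = MapT | RedT

record mr_inst =
  n_jobs  :: nat
  n_procs :: nat
  weight  :: "nat \<Rightarrow> real"
  release :: "nat \<Rightarrow> real"
  task    :: "nat \<Rightarrow> nat \<Rightarrow> ttype option"
  work    :: "nat \<Rightarrow> nat \<Rightarrow> real"
  budget  :: real

definition tasks :: "mr_inst \<Rightarrow> (nat \<times> nat) set" where
  "tasks I = {(i, j). i < n_procs I \<and> j < n_jobs I \<and> task I i j \<noteq> None}"

definition valid_inst :: "mr_inst \<Rightarrow> bool" where
  "valid_inst I \<longleftrightarrow> budget I > 0 \<and>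
     (\<forall>j < n_jobs I. weight I j > 0 \<and> release I j \<ge> 0 \<and>
        (\<exists>i < n_procs I. task I i j = Some MapT) \<and>
        (\<exists>i < n_procs I. task I i j = Some RedT)) \<and>
     (\<forall>i j. (i, j) \<in> tasks I \<longrightarrow> work I i j \<ge> 0)"

definition compl :: "mr_inst \<Rightarrow> (nat \<Rightarrow> nat \<Rightarrow> real) \<Rightarrow> (nat \<Rightarrow> nat \<Rightarrow> real) \<Rightarrow> nat \<Rightarrow> nat \<Rightarrow> real" where
  "compl I st sp i j = st i j + work I i j / sp i j"

definition energy :: "real \<Rightarrow> mr_inst \<Rightarrow> (nat \<Rightarrow> nat \<Rightarrow> real) \<Rightarrow> real" where
  "energy \<beta> I sp = (\<Sum>(i, j)\<in>tasks I. work I i j * sp i j powr (\<beta> - 1))"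

definition feasible :: "real \<Rightarrow> mr_inst \<Rightarrow> (nat \<Rightarrow> nat \<Rightarrow> real) \<Rightarrow> (nat \<Rightarrow> nat \<Rightarrow> real) \<Rightarrow> bool" where
  "feasible \<beta> I st sp \<longleftrightarrow>
     (\<forall>(i, j)\<in>tasks I. sp i j > 0 \<and> st i j \<ge> release I j) \<and>
     (\<forall>i j j'. (i, j) \<in> tasks I \<and> (i, j') \<in> tasks I \<and> j \<noteq> j' \<longrightarrow>
         compl I st sp i j \<le> st i j' \<or> compl I st sp i j' \<le> st i j) \<and>
     (\<forall>i i' j. (i, j) \<in> tasks I \<and> task I i j = Some RedT \<and> (i', j) \<in> tasks I \<and>
         task I i' j = Some MapT \<longrightarrow> compl I st sp i' j \<le> st i j) \<and>
     energy \<beta> I sp \<le> budget I"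

definition job_compl :: "mr_inst \<Rightarrow> (nat \<Rightarrow> nat \<Rightarrow> real) \<Rightarrow> (nat \<Rightarrow> nat \<Rightarrow> real) \<Rightarrow> nat \<Rightarrow> real" where
  "job_compl I st sp j = Max {compl I st sp i j | i. (i, j) \<in> tasks I}"

definition objective :: "mr_inst \<Rightarrow> (nat \<Rightarrow> nat \<Rightarrow> real) \<Rightarrow> (nat \<Rightarrow> nat \<Rightarrow> real) \<Rightarrow> real" where
  "objective I st sp = (\<Sum>j<n_jobs I. weight I j * job_compl I st sp j)"

text \<open>An order of the jobs is given by a position map pos (a bijection of 0..<n);
  job j precedes job j' iff pos j < pos j'.\<close>

definition is_order :: "mr_inst \<Rightarrow> (nat \<Rightarrow> nat) \<Rightarrow> bool" where
  "is_order I pos \<longleftrightarrow> bij_betw pos {..<n_jobs I} {..<n_jobs I}"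

definition respects_order :: "mr_inst \<Rightarrow> (nat \<Rightarrow> nat) \<Rightarrow> (nat \<Rightarrow> nat \<Rightarrow> real) \<Rightarrow> (nat \<Rightarrow> nat \<Rightarrow> real) \<Rightarrow> bool" where
  "respects_order I pos st sp \<longleftrightarrow>
     (\<forall>i j j'. (i, j) \<in> tasks I \<and> (i, j') \<in> tasks I \<and> pos j < pos j' \<longrightarrow>
        compl I st sp i j \<le> st i j')"

definition fcfs_order :: "mr_inst \<Rightarrow> (nat \<Rightarrow> nat) \<Rightarrow> bool" where
  "fcfs_order I pos \<longleftrightarrow> is_order I pos \<and>
     (\<forall>j < n_jobs I. \<forall>j' < n_jobs I. release I j < release I j' \<longrightarrow> pos j < pos j')"

definition OPT :: "real \<Rightarrow> mr_inst \<Rightarrow> real" where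
  "OPT \<beta> I = Inf {objective I st sp | st sp. feasible \<beta> I st sp}"

text \<open>Optimum of MR restricted to an FCFS order (best over all FCFS orders, in case of ties).\<close>

definition OPT_FCFS :: "real \<Rightarrow> mr_inst \<Rightarrow> real" where
  "OPT_FCFS \<beta> I = Inf {objective I st sp | st sp. feasible \<beta> I st sp \<and>
       (\<exists>pos. fcfs_order I pos \<and> respects_order I pos st sp)}"

end

theory Submission
  imports Defs
begin

text \<open>Job 0 carries the whole energy budget as Map work, so it cannot run faster than speed 1
  and occupies its Map processor for at least one time unit; it is released at time 0.
  The remaining n - 1 jobs have no work and are released just after, at time 1/n.
  FCFS puts job 0 first on the Map processor, so every job completes no earlier than time 1
  and the FCFS optimum is at least n. Without the order restriction, the empty jobs run at
  time 1/n and job 0 right after them, which costs at most 2 in total.\<close>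

lemma finite_tasks: "finite (tasks I)"
  by (rule finite_subset[of _ "{..<n_procs I} \<times> {..<n_jobs I}"]) (auto simp: tasks_def)

lemma finite_job_compls: "finite {compl I st sp i j | i. (i, j) \<in> tasks I}"
  by (rule finite_subset[of _ "(\<lambda>i. compl I st sp i j) ` {..<n_procs I}"])
     (auto simp: tasks_def)

lemma compl_le_job_compl:
  assumes "(i, j) \<in> tasks I"
  shows "compl I st sp i j \<le> job_compl I st sp j"
  unfolding job_compl_def using assms finite_job_compls by (intro Max_ge) auto

lemma job_compl_le:
  assumes "(i, j) \<in> tasks I" "\<And>i. (i, j) \<in> tasks I \<Longrightarrow> compl I st sp i j \<le> B"
  shows "job_compl I st sp j \<le> B"
  unfolding job_compl_def using assms finite_job_compls by (subst Max_le_iff) auto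

lemma release_le_compl:
  assumes "valid_inst I" "feasible \<beta> I st sp" "(i, j) \<in> tasks I"
  shows "release I j \<le> compl I st sp i j"
proof -
  have "sp i j > 0" "release I j \<le> st i j" "work I i j \<ge> 0"
    using assms unfolding feasible_def valid_inst_def by auto
  then have "release I j \<le> st i j" "0 \<le> work I i j / sp i j" by simp_all
  then show ?thesis unfolding compl_def by linarith
qed

lemma job_compl_nonneg:
  assumes "valid_inst I" "feasible \<beta> I st sp" "j < n_jobs I"
  shows "0 \<le> job_compl I st sp j"
proof -
  obtain i where "task I i j = Some MapT" "i < n_procs I"
    using assms(1,3) unfolding valid_inst_def by blast
  then have task: "(i, j) \<in> tasks I" using assms(3) by (simp add: tasks_def)
  have "0 \<le> release I j" using assms(1,3) by (simp add: valid_inst_def)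
  also have "\<dots> \<le> compl I st sp i j" using release_le_compl[OF assms(1,2) task] .
  also have "\<dots> \<le> job_compl I st sp j" using compl_le_job_compl[OF task] .
  finally show ?thesis .
qed

lemma objective_nonneg:
  assumes "valid_inst I" "feasible \<beta> I st sp"
  shows "0 \<le> objective I st sp"
  unfolding objective_def using assms job_compl_nonneg
  by (intro sum_nonneg mult_nonneg_nonneg) (auto simp: valid_inst_def less_imp_le)

lemma task_energy_le_energy:
  assumes "valid_inst I" "(i, j) \<in> tasks I"
  shows "work I i j * sp i j powr (\<beta> - 1) \<le> energy \<beta> I sp"
proof -
  have "(\<lambda>(i, j). work I i j * sp i j powr (\<beta> - 1)) (i, j)
      \<le> (\<Sum>(i, j)\<in>tasks I. work I i j * sp i j powr (\<beta> - 1))"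
    using assms by (intro member_le_sum) (auto simp: valid_inst_def finite_tasks)
  then show ?thesis by (simp add: energy_def)
qed

text \<open>The energy of this task alone forces its speed to be at most 1.\<close>

lemma work_le_duration_if_budget_le_work:
  assumes "\<beta> > 1" "valid_inst I" "feasible \<beta> I st sp" "(i, j) \<in> tasks I"
    and "budget I \<le> work I i j"
  shows "st i j + work I i j \<le> compl I st sp i j"
proof -
  have speed: "sp i j > 0" using assms(3,4) unfolding feasible_def by auto
  have work: "work I i j > 0" using assms(2,5) unfolding valid_inst_def by linarith
  have "work I i j * sp i j powr (\<beta> - 1) \<le> work I i j"
    using task_energy_le_energy[OF assms(2,4), where sp=sp and \<beta>=\<beta>] assms(3,5) unfolding feasible_def by linarith
  then have "sp i j powr (\<beta> - 1) \<le> 1" using work by simp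
  then have "sp i j \<le> 1"
    using gr_one_powr[of "sp i j" "\<beta> - 1"] assms(1) by fastforce
  then have "work I i j \<le> work I i j / sp i j"
    using speed work by (simp add: le_divide_eq)
  then show ?thesis unfolding compl_def by simp
qed

lemma OPT_lower_bound:
  assumes "feasible \<beta> I st sp" "\<And>st sp. feasible \<beta> I st sp \<Longrightarrow> L \<le> objective I st sp"
  shows "L \<le> OPT \<beta> I"
  unfolding OPT_def using assms by (intro cInf_greatest) auto

lemma OPT_le_objective:
  assumes "valid_inst I" "feasible \<beta> I st sp"
  shows "OPT \<beta> I \<le> objective I st sp"
  unfolding OPT_def using assms objective_nonneg
  by (intro cInf_lower bdd_belowI[of _ 0]) auto

lemma OPT_FCFS_lower_bound:
  assumes "feasible \<beta> I st sp" "fcfs_order I pos" "respects_order I pos st sp"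
    and "\<And>st sp pos. \<lbrakk>feasible \<beta> I st sp; fcfs_order I pos; respects_order I pos st sp\<rbrakk>
           \<Longrightarrow> L \<le> objective I st sp"
  shows "L \<le> OPT_FCFS \<beta> I"
  unfolding OPT_FCFS_def using assms by (intro cInf_greatest) auto

definition fcfs_gap_inst :: "nat \<Rightarrow> mr_inst" where
  "fcfs_gap_inst n = \<lparr> n_jobs = n, n_procs = 2, weight = (\<lambda>j. 1),
     release = (\<lambda>j. if j = 0 then 0 else 1 / real n),
     task = (\<lambda>i j. if i = 0 then Some MapT else if i = 1 then Some RedT else None),
     work = (\<lambda>i j. if i = 0 \<and> j = 0 then 1 else 0), budget = 1 \<rparr>"

lemma fcfs_gap_inst_simps:
  "n_jobs (fcfs_gap_inst n) = n" "n_procs (fcfs_gap_inst n) = 2"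
  "weight (fcfs_gap_inst n) = (\<lambda>j. 1)"
  "release (fcfs_gap_inst n) = (\<lambda>j. if j = 0 then 0 else 1 / real n)"
  "task (fcfs_gap_inst n) = (\<lambda>i j. if i = 0 then Some MapT else if i = 1 then Some RedT else None)"
  "work (fcfs_gap_inst n) = (\<lambda>i j. if i = 0 \<and> j = 0 then 1 else 0)"
  "budget (fcfs_gap_inst n) = 1"
  by (simp_all add: fcfs_gap_inst_def)

lemma tasks_fcfs_gap_inst: "tasks (fcfs_gap_inst n) = {(i, j). i < 2 \<and> j < n}"
  by (auto simp: tasks_def fcfs_gap_inst_simps)

lemma valid_fcfs_gap_inst: "valid_inst (fcfs_gap_inst n)"
  unfolding valid_inst_def by (auto simp: fcfs_gap_inst_simps tasks_fcfs_gap_inst)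

lemma objective_fcfs_gap_inst:
  "objective (fcfs_gap_inst n) st sp = (\<Sum>j<n. job_compl (fcfs_gap_inst n) st sp j)"
  unfolding objective_def by (simp add: fcfs_gap_inst_simps)

lemma energy_fcfs_gap_inst_unit_speed:
  assumes "0 < n"
  shows "energy \<beta> (fcfs_gap_inst n) (\<lambda>i j. 1) = 1"
proof -
  have "energy \<beta> (fcfs_gap_inst n) (\<lambda>i j. 1)
      = (\<Sum>t\<in>tasks (fcfs_gap_inst n). if t = (0, 0) then 1 else 0)"
    unfolding energy_def by (rule sum.cong) (auto simp: fcfs_gap_inst_simps split: if_splits)
  also have "\<dots> = 1" using assms by (simp add: tasks_fcfs_gap_inst finite_tasks)
  finally show ?thesis .
qed

lemma first_map_compl_ge_1:
  assumes "\<beta> > 1" "feasible \<beta> (fcfs_gap_inst n) st sp" "0 < n"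
  shows "1 \<le> compl (fcfs_gap_inst n) st sp 0 0"
proof -
  have task: "(0, 0) \<in> tasks (fcfs_gap_inst n)" using assms(3) by (simp add: tasks_fcfs_gap_inst)
  have "0 \<le> st 0 0" using assms(2) task unfolding feasible_def by (auto simp: fcfs_gap_inst_simps)
  then show ?thesis
    using work_le_duration_if_budget_le_work[OF assms(1) valid_fcfs_gap_inst assms(2) task]
    by (simp add: fcfs_gap_inst_simps)
qed

lemma objective_fcfs_gap_inst_ge_1:
  assumes "\<beta> > 1" "feasible \<beta> (fcfs_gap_inst n) st sp" "0 < n"
  shows "1 \<le> objective (fcfs_gap_inst n) st sp"
proof -
  let ?I = "fcfs_gap_inst n"
  have task: "(0, 0) \<in> tasks ?I" using assms(3) by (simp add: tasks_fcfs_gap_inst)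
  have "1 \<le> job_compl ?I st sp 0"
    using first_map_compl_ge_1[OF assms] compl_le_job_compl[OF task, of st sp] by linarith
  also have "\<dots> \<le> (\<Sum>j<n. job_compl ?I st sp j)"
    using assms valid_fcfs_gap_inst job_compl_nonneg
    by (intro member_le_sum) (auto simp: fcfs_gap_inst_simps)
  finally show ?thesis by (simp add: objective_fcfs_gap_inst)
qed

text \<open>Under FCFS job 0 precedes every other job on the Map processor.\<close>

lemma fcfs_objective_fcfs_gap_inst_ge_n:
  assumes "\<beta> > 1" "feasible \<beta> (fcfs_gap_inst n) st sp" "0 < n"
    and "fcfs_order (fcfs_gap_inst n) pos" "respects_order (fcfs_gap_inst n) pos st sp"
  shows "real n \<le> objective (fcfs_gap_inst n) st sp"
proof -
  let ?I = "fcfs_gap_inst n"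
  have waits: "1 \<le> job_compl ?I st sp j" if "j < n" for j
  proof -
    have tasks: "(0, j) \<in> tasks ?I" "(0, 0) \<in> tasks ?I"
      using that by (auto simp: tasks_fcfs_gap_inst)
    have "compl ?I st sp 0 0 \<le> compl ?I st sp 0 j"
    proof (cases "j = 0")
      case False
      then have "pos 0 < pos j"
        using assms(4) that unfolding fcfs_order_def by (simp add: fcfs_gap_inst_simps)
      then have "compl ?I st sp 0 0 \<le> st 0 j"
        using assms(5) tasks unfolding respects_order_def by blast
      moreover have "sp 0 j > 0" using assms(2) tasks unfolding feasible_def by auto
      ultimately show ?thesis unfolding compl_def by (simp add: fcfs_gap_inst_simps)
    qed simp
    then show ?thesis
      using first_map_compl_ge_1[OF assms(1-3)] compl_le_job_compl[OF tasks(1), of st sp] by linarith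
  qed
  have "real n = (\<Sum>j<n. 1::real)" by simp
  also have "\<dots> \<le> (\<Sum>j<n. job_compl ?I st sp j)" using waits by (intro sum_mono) simp
  finally show ?thesis by (simp add: objective_fcfs_gap_inst)
qed

definition early_schedule :: "nat \<Rightarrow> nat \<Rightarrow> nat \<Rightarrow> real" where
  "early_schedule n i j = (if i = 1 \<and> j = 0 then 1 / real n + 1 else 1 / real n)"

definition fcfs_schedule :: "nat \<Rightarrow> nat \<Rightarrow> real" where
  "fcfs_schedule i j = (if i = 0 \<and> j = 0 then 0 else 1)"

lemma feasible_early_schedule:
  assumes "0 < n"
  shows "feasible \<beta> (fcfs_gap_inst n) (early_schedule n) (\<lambda>i j. 1)"
  unfolding feasible_def using assms
  by (auto simp: energy_fcfs_gap_inst_unit_speed tasks_fcfs_gap_inst compl_def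
      early_schedule_def fcfs_gap_inst_simps)

lemma objective_early_schedule_le_2:
  assumes "0 < n"
  shows "objective (fcfs_gap_inst n) (early_schedule n) (\<lambda>i j. 1) \<le> 2"
proof -
  let ?I = "fcfs_gap_inst n"
  have "job_compl ?I (early_schedule n) (\<lambda>i j. 1) j \<le> 1 / real n + (if j = 0 then 1 else 0)"
    if "j < n" for j
    using that
    by (intro job_compl_le[of 0])
       (auto simp: tasks_fcfs_gap_inst compl_def early_schedule_def fcfs_gap_inst_simps)
  then have "objective ?I (early_schedule n) (\<lambda>i j. 1)
      \<le> (\<Sum>j<n. 1 / real n + (if j = 0 then 1 else 0))"
    unfolding objective_fcfs_gap_inst by (intro sum_mono) simp
  also have "\<dots> = 2" using assms by (simp add: sum.distrib)
  finally show ?thesis .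
qed

lemma feasible_fcfs_schedule:
  assumes "0 < n"
  shows "feasible \<beta> (fcfs_gap_inst n) fcfs_schedule (\<lambda>i j. 1)"
  unfolding feasible_def using assms
  by (auto simp: energy_fcfs_gap_inst_unit_speed tasks_fcfs_gap_inst compl_def
      fcfs_schedule_def fcfs_gap_inst_simps)

lemma fcfs_schedule_respects_fcfs_order:
  assumes "0 < n"
  shows "fcfs_order (fcfs_gap_inst n) id" "respects_order (fcfs_gap_inst n) id fcfs_schedule (\<lambda>i j. 1)"
  unfolding fcfs_order_def respects_order_def is_order_def using assms
  by (auto simp: tasks_fcfs_gap_inst compl_def fcfs_schedule_def fcfs_gap_inst_simps)

lemma OPT_fcfs_gap_inst:
  assumes "\<beta> > 1" "0 < n"
  shows "1 \<le> OPT \<beta> (fcfs_gap_inst n)" "OPT \<beta> (fcfs_gap_inst n) \<le> 2"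
proof -
  note early = feasible_early_schedule[OF assms(2), where \<beta>=\<beta>]
  show "1 \<le> OPT \<beta> (fcfs_gap_inst n)"
    using early objective_fcfs_gap_inst_ge_1[OF assms(1) _ assms(2)] by (rule OPT_lower_bound)
  show "OPT \<beta> (fcfs_gap_inst n) \<le> 2"
    using OPT_le_objective[OF valid_fcfs_gap_inst early] objective_early_schedule_le_2[OF assms(2)]
    by linarith
qed

lemma OPT_FCFS_fcfs_gap_inst:
  assumes "\<beta> > 1" "0 < n"
  shows "real n \<le> OPT_FCFS \<beta> (fcfs_gap_inst n)"
  using assms fcfs_objective_fcfs_gap_inst_ge_n
  by (intro OPT_FCFS_lower_bound[OF feasible_fcfs_schedule fcfs_schedule_respects_fcfs_order])
     auto

theorem proposition3:
  fixes \<beta> :: real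
  assumes "\<beta> > 1"
  shows "\<exists>(inst :: nat \<Rightarrow> mr_inst) (c :: real) (N :: nat). c > 0 \<and>
           (\<forall>n \<ge> 1. valid_inst (inst n) \<and> n_jobs (inst n) = n) \<and>
           (\<forall>n \<ge> N. OPT \<beta> (inst n) > 0 \<and>
                     OPT_FCFS \<beta> (inst n) / OPT \<beta> (inst n) \<ge> c * real n)"
proof (intro exI[of _ fcfs_gap_inst] exI[of _ "1/2"] exI[of _ 1] conjI allI impI)
  fix n :: nat
  show "valid_inst (fcfs_gap_inst n)" by (rule valid_fcfs_gap_inst)
  show "n_jobs (fcfs_gap_inst n) = n" by (simp add: fcfs_gap_inst_simps)
  assume "1 \<le> n"
  then have n: "0 < n" by simp
  note OPT = OPT_fcfs_gap_inst[OF assms n]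
  show "0 < OPT \<beta> (fcfs_gap_inst n)" using OPT(1) by linarith
  have "1/2 * real n \<le> OPT_FCFS \<beta> (fcfs_gap_inst n) / 2"
    using OPT_FCFS_fcfs_gap_inst[OF assms n] by simp
  also have "\<dots> \<le> OPT_FCFS \<beta> (fcfs_gap_inst n) / OPT \<beta> (fcfs_gap_inst n)"
    using OPT OPT_FCFS_fcfs_gap_inst[OF assms n] by (intro divide_left_mono) auto
  finally show "1/2 * real n \<le> OPT_FCFS \<beta> (fcfs_gap_inst n) / OPT \<beta> (fcfs_gap_inst n)" .
qed (simp_all)

end
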